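(* Let $P_X$ be a distribution on a finite alphabet $\mathsf{X}$, $\mathsf{Y}$ a finite reconstruction alphabet, and $W_{X|Y}$ a conditional distribution of $X$ given $Y$. Let $$\mathcal{A}(P_X,W_{X|Y}):=\Big\{P_Y\in\mathcal{P}(\mathsf{Y}):\ \sum_{y}P_Y(y)W_{X|Y}(x|y)=P_X(x)\ \text{for all }x\in\mathsf{X}\Big\}$$ be non-empty, let $R^\star:=\min_{P_Y\in\mathcal{A}(P_X,W_{X|Y})}I(X;Y)$ (mutual information under $P_YW_{X|Y}$), and let $P_Y\in\mathcal{A}(P_X,W_{X|Y})$ attain this minimum. Consider a sequence of $(n,\Theta_n)$ lossy compression protocols (randomized encoders $\mathcal{E}^{(n)}(m|x^n)$ and randomized decoders $\mathcal{D}^{(n)}(y^n|m)$, $m\in[\Theta_n]$) with induced joint distributions $P_{X^nY^n}(x^n,y^n)=P_X^n(x^n)\sum_m\mathcal{E}^{(n)}(m|x^n)\mathcal{D}^{(n)}(y^n|m)$ such that $\lim_{n\to\infty}\frac1n\log\Theta_n=R^\star$ and $\lim_{n\to\infty}\|P_{X^nY^n}-P_{Y^n}W^n_{X|Y}\|_{\mathrm{TV}}=0$, where $P_{Y^n}$ is the $Y^n$-marginal of $P_{X^nY^n}$ and $W^n_{X|Y}(x^n|y^n)=\prod_iW_{X|Y}(x_i|y_i)$. Let $c>0$ be a constant and $b:\mathsf{X}\to\mathbb{R}$ a function, define the distortion $d(x,y)=-c\log_2W_{X|Y}(x|y)+b(x)$ and the level $D:=\mathbb{E}[d(X,Y)]$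 with respect to $P_YW_{X|Y}$. Then the same sequence of protocols achieves the Shannon rate-distortion function of the source $P_X$ with distortion $d$ at distortion level $D$; that is, $$\lim_{n\to\infty}\mathbb{E}\Big[\frac1n\sum_{i=1}^n d(X_i,Y_i)\Big]=D,$$ where the expectation is with respect to $P_{X^nY^n}$.
   Context: $\mathcal{P}(\mathsf{Y})$ denotes the set of probability distributions on $\mathsf{Y}$; $P_X^n$ is the i.i.d. product distribution; $\|\cdot\|_{\mathrm{TV}}$ is total variation distance. The Shannon rate-distortion function of $P_X$ with distortion $d$ at level $D$ is $\min\{I(X;Y):P_{Y|X},\ \mathbb{E}[d(X,Y)]\le D\}$. *)

theory Defs
  imports "HOL-Analysis.Analysis"
begin

definition is_pmf :: "('a::finite \<Rightarrow> real) \<Rightarrow> bool" where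
  "is_pmf p \<longleftrightarrow> (\<forall>a. 0 \<le> p a) \<and> (\<Sum>a\<in>UNIV. p a) = 1"

text \<open>Conditional distribution W(x|y), written W y x.\<close>
definition is_channel :: "('y::finite \<Rightarrow> 'x::finite \<Rightarrow> real) \<Rightarrow> bool" where
  "is_channel W \<longleftrightarrow> (\<forall>y. is_pmf (W y))"

definition compat_set :: "('x::finite \<Rightarrow> real) \<Rightarrow> ('y::finite \<Rightarrow> 'x \<Rightarrow> real) \<Rightarrow> ('y \<Rightarrow> real) set" where
  "compat_set PX W = {PY. is_pmf PY \<and> (\<forall>x. (\<Sum>y\<in>UNIV. PY y * W y x) = PX x)}"

definition mutual_info :: "('x::finite \<Rightarrow> 'y::finite \<Rightarrow> real) \<Rightarrow> real" where
  "mutual_info J = (\<Sum>x\<in>UNIV. \<Sum>y\<in>UNIV.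
      (if J x y = 0 then 0
       else J x y * log 2 (J x y / ((\<Sum>y'\<in>UNIV. J x y') * (\<Sum>x'\<in>UNIV. J x' y)))))"

definition MI_of :: "('y::finite \<Rightarrow> real) \<Rightarrow> ('y \<Rightarrow> 'x::finite \<Rightarrow> real) \<Rightarrow> real" where
  "MI_of PY W = mutual_info (\<lambda>x y. PY y * W y x)"

definition seqs :: "nat \<Rightarrow> 'a list set" where
  "seqs n = {xs. length xs = n}"

definition iid :: "('a \<Rightarrow> real) \<Rightarrow> 'a list \<Rightarrow> real" where
  "iid P xs = (\<Prod>i<length xs. P (xs ! i))"

definition prod_chan :: "('y \<Rightarrow> 'x \<Rightarrow> real) \<Rightarrow> 'y list \<Rightarrow> 'x list \<Rightarrow> real" where
  "prod_chan W ys xs = (\<Prod>i<length xs. W (ys ! i) (xs ! i))"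

definition is_protocol ::
  "nat \<Rightarrow> nat \<Rightarrow> ('x::finite list \<Rightarrow> nat \<Rightarrow> real) \<Rightarrow> (nat \<Rightarrow> 'y::finite list \<Rightarrow> real) \<Rightarrow> bool" where
  "is_protocol n \<Theta> E D \<longleftrightarrow> 0 < \<Theta> \<and>
     (\<forall>xs\<in>seqs n. (\<forall>m<\<Theta>. 0 \<le> E xs m) \<and> (\<Sum>m<\<Theta>. E xs m) = 1) \<and>
     (\<forall>m<\<Theta>. (\<forall>ys\<in>seqs n. 0 \<le> D m ys) \<and> (\<Sum>ys\<in>seqs n. D m ys) = 1)"

definition joint_dist ::
  "('x \<Rightarrow> real) \<Rightarrow> nat \<Rightarrow> ('x list \<Rightarrow> nat \<Rightarrow> real) \<Rightarrow> (nat \<Rightarrow> 'y list \<Rightarrow> real) \<Rightarrow> 'x list \<Rightarrow> 'y list \<Rightarrow> real" where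
  "joint_dist PX \<Theta> E D xs ys = iid PX xs * (\<Sum>m<\<Theta>. E xs m * D m ys)"

definition ymarg :: "nat \<Rightarrow> ('x list \<Rightarrow> 'y list \<Rightarrow> real) \<Rightarrow> 'y list \<Rightarrow> real" where
  "ymarg n J ys = (\<Sum>xs\<in>seqs n. J xs ys)"

definition tv_to_channel :: "nat \<Rightarrow> ('x list \<Rightarrow> 'y list \<Rightarrow> real) \<Rightarrow> ('y \<Rightarrow> 'x \<Rightarrow> real) \<Rightarrow> real" where
  "tv_to_channel n J W = (1/2) * (\<Sum>xs\<in>seqs n. \<Sum>ys\<in>seqs n.
       \<bar>J xs ys - ymarg n J ys * prod_chan W ys xs\<bar>)"

end

theory Submission
  imports Defs
begin

(* Let a_n be the expected per-letter log loss (1/n) E[-log W^n(X^n|Y^n)] under P_{X^nY^n}.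
   The X^n-marginal of every protocol is P_X^n, so the expected distortion is c a_n + E b(X), while
   that of P_Y W is c G + E b(X) with G = sum_y P_Y(y) H(W(.|y)). On A(P_X, W) the mutual
   information equals H(P_X) - sum_y Q(y) H(W(.|y)), so G is the maximum of this linear functional
   over A(P_X, W), and it suffices to show a_n -> G.

   Lower bound: Gibbs' inequality against (1/Theta_n) sum_m D(y^n|m) W^n(x^n|y^n) gives
   n a_n >= n H(P_X) - log Theta_n - 1/ln 2 - O(n TV), and log Theta_n / n -> H(P_X) - G.
   Upper bound: replacing P_{X^nY^n} by P_{Y^n} W^n costs O(n TV), and under P_{Y^n} W^n the
   per-letter log loss is sum_y Q_n(y) H(W(.|y)), where Q_n averages the coordinate marginals
   of P_{Y^n}. As Q_n W -> P_X, every limit point of Q_n lies in A(P_X, W) by compactness,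
   so limsup a_n <= G. *)

definition entropy :: "('a::finite \<Rightarrow> real) \<Rightarrow> real" where
  "entropy p = (\<Sum>a\<in>UNIV. - (p a * log 2 (p a)))"

definition joint_expect ::
  "nat \<Rightarrow> ('x list \<Rightarrow> 'y list \<Rightarrow> real) \<Rightarrow> ('x list \<Rightarrow> 'y list \<Rightarrow> real) \<Rightarrow> real" where
  "joint_expect n J f = (\<Sum>xs\<in>seqs n. \<Sum>ys\<in>seqs n. J xs ys * f xs ys)"

definition ymarg_chan ::
  "nat \<Rightarrow> ('x list \<Rightarrow> 'y list \<Rightarrow> real) \<Rightarrow> ('y \<Rightarrow> 'x \<Rightarrow> real) \<Rightarrow> 'x list \<Rightarrow> 'y list \<Rightarrow> real" where
  "ymarg_chan n J W xs ys = ymarg n J ys * prod_chan W ys xs"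

definition log_loss :: "('y \<Rightarrow> 'x \<Rightarrow> real) \<Rightarrow> nat \<Rightarrow> 'x list \<Rightarrow> 'y list \<Rightarrow> real" where
  "log_loss W n xs ys = (\<Sum>i<n. - log 2 (W (ys ! i) (xs ! i)))"

definition avg_marginal :: "nat \<Rightarrow> ('y list \<Rightarrow> real) \<Rightarrow> 'y \<Rightarrow> real" where
  "avg_marginal n P y = (\<Sum>ys\<in>seqs n. P ys * (\<Sum>i<n. of_bool (ys ! i = y))) / real n"

section \<open>Sums over sequences\<close>

lemma finite_seqs [simp]: "finite (seqs n :: 'a::finite list set)"
proof -
  have "seqs n = {xs::'a list. set xs \<subseteq> UNIV \<and> length xs = n}"
    by (auto simp: seqs_def)
  then show ?thesis
    using finite_lists_length_eq[of "UNIV::'a set" n] by simp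
qed

lemma seqs_0: "seqs 0 = {[]}"
  by (auto simp: seqs_def)

lemma sum_seqs_Suc:
  fixes F :: "'a::finite list \<Rightarrow> 'b::comm_monoid_add"
  shows "(\<Sum>xs\<in>seqs (Suc n). F xs) = (\<Sum>x\<in>UNIV. \<Sum>xs\<in>seqs n. F (x # xs))"
proof -
  have seqs_Suc: "seqs (Suc n) = (\<lambda>(x, xs). x # xs) ` (UNIV \<times> seqs n)"
    by (auto simp: seqs_def image_iff length_Suc_conv)
  have inj: "inj_on (\<lambda>(x, xs). x # xs) (UNIV \<times> seqs n)"
    by (auto simp: inj_on_def)
  have "(\<Sum>xs\<in>seqs (Suc n). F xs) = (\<Sum>p\<in>UNIV \<times> seqs n. F ((\<lambda>(x, xs). x # xs) p))"
    unfolding seqs_Suc by (rule sum.reindex[OF inj, unfolded comp_def])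
  then show ?thesis
    by (simp add: sum.cartesian_product case_prod_unfold)
qed

lemma sum_seqs_prod:
  fixes f :: "nat \<Rightarrow> 'a::finite \<Rightarrow> 'b::comm_semiring_1"
  shows "(\<Sum>xs\<in>seqs n. \<Prod>i<n. f i (xs ! i)) = (\<Prod>i<n. \<Sum>x\<in>UNIV. f i x)"
proof (induction n arbitrary: f)
  case 0
  then show ?case by (simp add: seqs_0)
next
  case (Suc n)
  have "(\<Sum>xs\<in>seqs (Suc n). \<Prod>i<Suc n. f i (xs ! i))
      = (\<Sum>x\<in>UNIV. \<Sum>xs\<in>seqs n. f 0 x * (\<Prod>i<n. f (Suc i) (xs ! i)))"
    by (simp only: sum_seqs_Suc prod.lessThan_Suc_shift nth_Cons_0 nth_Cons_Suc)
  also have "\<dots> = (\<Sum>x\<in>UNIV. f 0 x * (\<Prod>i<n. \<Sum>x\<in>UNIV. f (Suc i) x))"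
    using Suc.IH[of "\<lambda>i. f (Suc i)"] by (simp add: sum_distrib_left[symmetric])
  also have "\<dots> = (\<Prod>i<Suc n. \<Sum>x\<in>UNIV. f i x)"
    by (simp only: prod.lessThan_Suc_shift sum_distrib_right)
  finally show ?case .
qed

lemma sum_seqs_prod_mult_coord:
  fixes f :: "nat \<Rightarrow> 'a::finite \<Rightarrow> 'b::comm_semiring_1"
  assumes j: "j < n" and sum_one: "\<And>i. i < n \<Longrightarrow> i \<noteq> j \<Longrightarrow> (\<Sum>x\<in>UNIV. f i x) = 1"
  shows "(\<Sum>xs\<in>seqs n. (\<Prod>i<n. f i (xs ! i)) * \<phi> (xs ! j)) = (\<Sum>x\<in>UNIV. f j x * \<phi> x)"
proof -
  define g where "g i x = (if i = j then f i x * \<phi> x else f i x)" for i x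
  have "(\<Prod>i<n. g i (xs ! i)) = (\<Prod>i<n. f i (xs ! i)) * \<phi> (xs ! j)" for xs
  proof -
    have "(\<Prod>i\<in>{..<n}-{j}. g i (xs ! i)) = (\<Prod>i\<in>{..<n}-{j}. f i (xs ! i))"
      by (rule prod.cong) (auto simp: g_def)
    then show ?thesis
      using j by (simp add: prod.remove g_def ac_simps)
  qed
  then have "(\<Sum>xs\<in>seqs n. (\<Prod>i<n. f i (xs ! i)) * \<phi> (xs ! j)) = (\<Prod>i<n. \<Sum>x\<in>UNIV. g i x)"
    by (simp add: sum_seqs_prod[symmetric])
  also have "\<dots> = (\<Sum>x\<in>UNIV. g j x) * (\<Prod>i\<in>{..<n}-{j}. \<Sum>x\<in>UNIV. g i x)"
    using j by (simp add: prod.remove)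
  also have "(\<Prod>i\<in>{..<n}-{j}. \<Sum>x\<in>UNIV. g i x) = 1"
    by (rule prod.neutral) (auto simp: g_def sum_one)
  finally show ?thesis
    by (simp add: g_def)
qed

lemma sum_seqs_prod_mult_sum:
  fixes f :: "nat \<Rightarrow> 'a::finite \<Rightarrow> 'b::comm_semiring_1"
  assumes "\<And>i. i < n \<Longrightarrow> (\<Sum>x\<in>UNIV. f i x) = 1"
  shows "(\<Sum>xs\<in>seqs n. (\<Prod>i<n. f i (xs ! i)) * (\<Sum>i<n. \<phi> i (xs ! i)))
       = (\<Sum>i<n. \<Sum>x\<in>UNIV. f i x * \<phi> i x)"
proof -
  have "(\<Sum>xs\<in>seqs n. (\<Prod>i<n. f i (xs ! i)) * (\<Sum>i<n. \<phi> i (xs ! i)))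
      = (\<Sum>i<n. \<Sum>xs\<in>seqs n. (\<Prod>j<n. f j (xs ! j)) * \<phi> i (xs ! i))"
    by (simp add: sum_distrib_left sum.swap[of _ "seqs n"])
  also have "\<dots> = (\<Sum>i<n. \<Sum>x\<in>UNIV. f i x * \<phi> i x)"
    using assms by (intro sum.cong refl sum_seqs_prod_mult_coord) auto
  finally show ?thesis .
qed

lemma sum_occurrences_mult:
  fixes h :: "'a::finite \<Rightarrow> real"
  shows "(\<Sum>y\<in>UNIV. (\<Sum>i<n. of_bool (ys ! i = y)) * h y) = (\<Sum>i<n. h (ys ! i))"
proof -
  have "(\<Sum>y\<in>UNIV. (\<Sum>i<n. of_bool (ys ! i = y)) * h y)
      = (\<Sum>i<n. \<Sum>y\<in>UNIV. of_bool (ys ! i = y) * h y)"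
    by (simp only: sum_distrib_right sum.swap[of _ UNIV])
  also have "\<dots> = (\<Sum>i<n. h (ys ! i))"
    by simp
  finally show ?thesis .
qed

lemma pmf_nonneg: "is_pmf p \<Longrightarrow> 0 \<le> p a"
  by (simp add: is_pmf_def)

lemma pmf_le_1:
  assumes "is_pmf (p :: 'a::finite \<Rightarrow> real)"
  shows "p a \<le> 1"
proof -
  have "p a \<le> (\<Sum>b\<in>UNIV. p b)"
    using assms by (intro member_le_sum) (auto simp: is_pmf_def)
  then show ?thesis
    using assms by (simp add: is_pmf_def)
qed

lemma neg_log_nonneg: "0 \<le> p \<Longrightarrow> p \<le> 1 \<Longrightarrow> 0 \<le> - log 2 p"
  by (cases "p = 0") (simp_all add: log_def divide_nonpos_pos)

lemma neg_log_prod_lessThan: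
  fixes n :: nat
  assumes "(\<Prod>i<n. f i) \<noteq> (0::real)"
  shows "- log 2 (\<Prod>i<n. f i) = (\<Sum>i<n. - log 2 (f i))"
proof -
  have "ln (\<Prod>i<n. f i) = (\<Sum>i<n. ln (f i))"
    using assms by (intro ln_prod) (auto simp: prod_zero_iff)
  then show ?thesis
    by (simp add: log_def sum_divide_distrib sum_negf)
qed

lemma iid_seqs: "xs \<in> seqs n \<Longrightarrow> iid P xs = (\<Prod>i<n. P (xs ! i))"
  by (simp add: seqs_def iid_def)

lemma prod_chan_seqs: "xs \<in> seqs n \<Longrightarrow> prod_chan W ys xs = (\<Prod>i<n. W (ys ! i) (xs ! i))"
  by (simp add: seqs_def prod_chan_def)

lemma iid_nonneg: "is_pmf P \<Longrightarrow> 0 \<le> iid P xs"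
  by (simp add: iid_def pmf_nonneg prod_nonneg)

lemma prod_chan_nonneg: "is_channel W \<Longrightarrow> 0 \<le> prod_chan W ys xs"
  by (simp add: prod_chan_def is_channel_def pmf_nonneg prod_nonneg)

lemma sum_iid:
  assumes "is_pmf (P :: 'a::finite \<Rightarrow> real)"
  shows "(\<Sum>xs\<in>seqs n. iid P xs) = 1"
  using assms sum_seqs_prod[of "\<lambda>_. P" n] by (simp add: iid_seqs is_pmf_def cong: sum.cong)

lemma sum_prod_chan:
  assumes "is_channel (W :: 'y::finite \<Rightarrow> 'x::finite \<Rightarrow> real)"
  shows "(\<Sum>xs\<in>seqs n. prod_chan W ys xs) = 1"
  using assms sum_seqs_prod[of "\<lambda>i. W (ys ! i)" n]
  by (simp add: prod_chan_seqs is_channel_def is_pmf_def cong: sum.cong)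

lemma sum_iid_mult_sum:
  assumes "is_pmf (P :: 'a::finite \<Rightarrow> real)"
  shows "(\<Sum>xs\<in>seqs n. iid P xs * (\<Sum>i<n. \<phi> (xs ! i))) = real n * (\<Sum>x\<in>UNIV. P x * \<phi> x)"
  using assms sum_seqs_prod_mult_sum[of n "\<lambda>_. P" "\<lambda>_. \<phi>"]
  by (simp add: iid_seqs is_pmf_def cong: sum.cong)

lemma sum_prod_chan_mult_sum:
  assumes "is_channel (W :: 'y::finite \<Rightarrow> 'x::finite \<Rightarrow> real)"
  shows "(\<Sum>xs\<in>seqs n. prod_chan W ys xs * (\<Sum>i<n. \<psi> (ys ! i) (xs ! i)))
       = (\<Sum>i<n. \<Sum>x\<in>UNIV. W (ys ! i) x * \<psi> (ys ! i) x)"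
  using assms sum_seqs_prod_mult_sum[of n "\<lambda>i. W (ys ! i)" "\<lambda>i. \<psi> (ys ! i)"]
  by (simp add: prod_chan_seqs is_channel_def is_pmf_def cong: sum.cong)

section \<open>Expectations under joint distributions\<close>

lemma log_loss_nonneg: "is_channel W \<Longrightarrow> 0 \<le> log_loss W n xs ys"
  unfolding log_loss_def
  by (intro sum_nonneg neg_log_nonneg) (auto simp: is_channel_def pmf_nonneg pmf_le_1)

lemma joint_expect_linear:
  "joint_expect n J (\<lambda>xs ys. a * f xs ys + b * g xs ys) = a * joint_expect n J f + b * joint_expect n J g"
  by (simp add: joint_expect_def sum.distrib sum_distrib_left algebra_simps)

lemma joint_expect_diff_le:
  assumes "\<And>xs ys. xs \<in> seqs n \<Longrightarrow> ys \<in> seqs n \<Longrightarrow> \<bar>F xs ys\<bar> \<le> M"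
  shows "\<bar>joint_expect n J F - joint_expect n K F\<bar>
         \<le> (\<Sum>xs\<in>seqs n. \<Sum>ys\<in>seqs n. \<bar>J xs ys - K xs ys\<bar>) * M"
proof -
  have "\<bar>joint_expect n J F - joint_expect n K F\<bar>
      = \<bar>\<Sum>xs\<in>seqs n. \<Sum>ys\<in>seqs n. (J xs ys - K xs ys) * F xs ys\<bar>"
    by (simp add: joint_expect_def sum_subtractf[symmetric] left_diff_distrib)
  also have "\<dots> \<le> (\<Sum>xs\<in>seqs n. \<Sum>ys\<in>seqs n. \<bar>J xs ys - K xs ys\<bar> * \<bar>F xs ys\<bar>)"
    by (rule order_trans[OF sum_abs sum_mono], rule order_trans[OF sum_abs]) (simp add: abs_mult)
  also have "\<dots> \<le> (\<Sum>xs\<in>seqs n. \<Sum>ys\<in>seqs n. \<bar>J xs ys - K xs ys\<bar> * M)"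
    using assms by (intro sum_mono mult_left_mono) auto
  finally show ?thesis
    by (simp add: sum_distrib_right)
qed

lemma joint_expect_ymarg_chan_diff_le:
  assumes "\<And>xs ys. xs \<in> seqs n \<Longrightarrow> ys \<in> seqs n \<Longrightarrow> \<bar>F xs ys\<bar> \<le> M"
  shows "\<bar>joint_expect n J F - joint_expect n (ymarg_chan n J W) F\<bar> \<le> 2 * tv_to_channel n J W * M"
  using joint_expect_diff_le[where J=J and K="ymarg_chan n J W", OF assms]
  by (simp add: tv_to_channel_def ymarg_chan_def)

lemma sum_avg_marginal_mult:
  fixes h :: "'y::finite \<Rightarrow> real"
  shows "(\<Sum>y\<in>UNIV. avg_marginal n P y * h y) = (\<Sum>ys\<in>seqs n. P ys * (\<Sum>i<n. h (ys ! i))) / real n"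
proof -
  have "(\<Sum>y\<in>UNIV. avg_marginal n P y * h y)
      = (\<Sum>y\<in>UNIV. \<Sum>ys\<in>seqs n. P ys * ((\<Sum>i<n. of_bool (ys ! i = y)) * h y)) / real n"
    by (simp add: avg_marginal_def sum_divide_distrib sum_distrib_right mult.assoc)
  also have "\<dots> = (\<Sum>ys\<in>seqs n. \<Sum>y\<in>UNIV. P ys * ((\<Sum>i<n. of_bool (ys ! i = y)) * h y)) / real n"
    by (subst sum.swap) (rule refl)
  also have "\<dots> = (\<Sum>ys\<in>seqs n. P ys * (\<Sum>i<n. h (ys ! i))) / real n"
    by (simp only: sum_distrib_left[symmetric] sum_occurrences_mult)
  finally show ?thesis .
qed

lemma joint_expect_ymarg_chan_sum:
  fixes W :: "'y::finite \<Rightarrow> 'x::finite \<Rightarrow> real"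
  assumes "is_channel W"
  shows "joint_expect n (ymarg_chan n J W) (\<lambda>xs ys. \<Sum>i<n. \<psi> (ys ! i) (xs ! i))
       = real n * (\<Sum>y\<in>UNIV. avg_marginal n (ymarg n J) y * (\<Sum>x\<in>UNIV. W y x * \<psi> y x))"
proof -
  have "joint_expect n (ymarg_chan n J W) (\<lambda>xs ys. \<Sum>i<n. \<psi> (ys ! i) (xs ! i))
      = (\<Sum>ys\<in>seqs n. \<Sum>xs\<in>seqs n. ymarg n J ys * (prod_chan W ys xs * (\<Sum>i<n. \<psi> (ys ! i) (xs ! i))))"
    unfolding joint_expect_def ymarg_chan_def by (subst sum.swap) (simp add: mult.assoc)
  also have "\<dots> = (\<Sum>ys\<in>seqs n. ymarg n J ys * (\<Sum>i<n. \<Sum>x\<in>UNIV. W (ys ! i) x * \<psi> (ys ! i) x))"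
    by (simp only: sum_distrib_left[symmetric] sum_prod_chan_mult_sum[OF assms])
  finally show ?thesis
    by (cases "n = 0") (simp_all add: sum_avg_marginal_mult)
qed

lemma joint_expect_log_loss_upper:
  fixes W :: "'y::finite \<Rightarrow> 'x::finite \<Rightarrow> real"
  assumes W: "is_channel W"
  shows "joint_expect n J (log_loss W n)
         \<le> real n * (\<Sum>y\<in>UNIV. avg_marginal n (ymarg n J) y * entropy (W y))
           + 2 * tv_to_channel n J W * (real n * (\<Sum>y\<in>UNIV. \<Sum>x\<in>UNIV. - log 2 (W y x)))"
proof -
  let ?C = "\<Sum>y\<in>UNIV. \<Sum>x\<in>UNIV. - log 2 (W y x)"
  have neg_log_W: "0 \<le> - log 2 (W y x)" for y x
    using W by (intro neg_log_nonneg) (auto simp: is_channel_def pmf_nonneg pmf_le_1)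
  have "- log 2 (W y x) \<le> ?C" for y x
  proof -
    have "- log 2 (W y x) \<le> (\<Sum>x'\<in>UNIV. - log 2 (W y x'))"
      by (rule member_le_sum) (use neg_log_W in auto)
    also have "\<dots> \<le> ?C"
      by (rule member_le_sum) (auto intro: sum_nonneg neg_log_W)
    finally show ?thesis .
  qed
  then have "log_loss W n xs ys \<le> real n * ?C" for xs ys
    using sum_mono[of "{..<n}" "\<lambda>i. - log 2 (W (ys ! i) (xs ! i))" "\<lambda>_. ?C"]
    by (simp add: log_loss_def)
  then have "\<bar>log_loss W n xs ys\<bar> \<le> real n * ?C" for xs ys
    using log_loss_nonneg[OF W] by simp
  then have "\<bar>joint_expect n J (log_loss W n) - joint_expect n (ymarg_chan n J W) (log_loss W n)\<bar>
      \<le> 2 * tv_to_channel n J W * (real n * ?C)"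
    by (rule joint_expect_ymarg_chan_diff_le)
  then have "joint_expect n J (log_loss W n)
      \<le> joint_expect n (ymarg_chan n J W) (log_loss W n) + 2 * tv_to_channel n J W * (real n * ?C)"
    by linarith
  moreover have "joint_expect n (ymarg_chan n J W) (log_loss W n)
      = real n * (\<Sum>y\<in>UNIV. avg_marginal n (ymarg n J) y * entropy (W y))"
    using joint_expect_ymarg_chan_sum[OF W, of n J "\<lambda>y x. - log 2 (W y x)"]
    by (simp add: log_loss_def[abs_def] entropy_def)
  ultimately show ?thesis
    by simp
qed

section \<open>Protocols\<close>

text \<open>Gibbs' inequality \<open>ln u \<le> u - 1\<close> at \<open>u = R / J\<close>, where \<open>J = P s\<close> and \<open>R = (t / T) w\<close>.\<close>
lemma gibbs_pointwise:
  fixes P s t w T :: real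
  assumes "P > 0" "s > 0" "s \<le> t" "w > 0" "T \<ge> 1"
  shows "P * s * (- log 2 P) - P * s * log 2 T - (t / T) * w / ln 2 \<le> P * s * (- log 2 w)"
proof -
  define J where "J = P * s"
  define R where "R = (t / T) * w"
  have J: "J > 0" and R: "R > 0"
    using assms by (simp_all add: J_def R_def)
  have "J * ln (R / J) \<le> J * (R / J - 1)"
    using J R by (intro mult_left_mono ln_le_minus_one) simp_all
  also have "\<dots> = R - J"
    using J by (simp add: field_simps)
  finally have gibbs: "J * ln (R / J) \<le> R - J" .
  have "ln (R / J) = ln t - ln T + ln w - ln P - ln s"
    using assms by (simp add: R_def J_def ln_div ln_mult)
  moreover have "ln s \<le> ln t"
    using assms by simp
  ultimately have "ln w - ln P - ln T \<le> ln (R / J)"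
    by linarith
  then have "J * (ln w - ln P - ln T) \<le> J * ln (R / J)"
    using J by (intro mult_left_mono) simp_all
  then have "J * (ln w - ln P - ln T) \<le> R"
    using gibbs J by linarith
  then have "0 \<le> (R - J * (ln w - ln P - ln T)) / ln 2"
    by simp
  moreover have "P * s * (- log 2 w) - (P * s * (- log 2 P) - P * s * log 2 T - (t / T) * w / ln 2)
      = (R - J * (ln w - ln P - ln T)) / ln 2"
    by (simp add: log_def J_def R_def field_simps)
  ultimately show ?thesis
    by linarith
qed

context
  fixes PX :: "'x::finite \<Rightarrow> real" and n T :: nat
    and E :: "'x list \<Rightarrow> nat \<Rightarrow> real" and D :: "nat \<Rightarrow> 'y::finite list \<Rightarrow> real"
  assumes PX: "is_pmf PX" and prot: "is_protocol n T E D"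
begin

lemma joint_dist_nonneg:
  assumes "xs \<in> seqs n" "ys \<in> seqs n"
  shows "0 \<le> joint_dist PX T E D xs ys"
  using assms prot iid_nonneg[OF PX]
  by (auto simp: joint_dist_def is_protocol_def intro!: mult_nonneg_nonneg sum_nonneg)

lemma sum_joint_dist_row:
  assumes xs: "xs \<in> seqs n"
  shows "(\<Sum>ys\<in>seqs n. joint_dist PX T E D xs ys) = iid PX xs"
proof -
  have "(\<Sum>ys\<in>seqs n. joint_dist PX T E D xs ys)
      = iid PX xs * (\<Sum>m<T. E xs m * (\<Sum>ys\<in>seqs n. D m ys))"
    unfolding joint_dist_def sum_distrib_left[symmetric]
    by (subst sum.swap) (simp add: sum_distrib_left)
  also have "\<dots> = iid PX xs"
    using xs prot by (simp add: is_protocol_def)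
  finally show ?thesis .
qed

lemma sum_joint_dist: "(\<Sum>xs\<in>seqs n. \<Sum>ys\<in>seqs n. joint_dist PX T E D xs ys) = 1"
  by (simp add: sum_joint_dist_row sum_iid[OF PX] cong: sum.cong)

lemma sum_ymarg: "(\<Sum>ys\<in>seqs n. ymarg n (joint_dist PX T E D) ys) = 1"
  unfolding ymarg_def by (subst sum.swap) (rule sum_joint_dist)

lemma sum_decoder_output_chan:
  fixes W :: "'y \<Rightarrow> 'x \<Rightarrow> real"
  assumes W: "is_channel W"
  shows "(\<Sum>xs\<in>seqs n. \<Sum>ys\<in>seqs n. (\<Sum>m<T. D m ys) / real T * prod_chan W ys xs) = 1"
proof -
  have "(\<Sum>xs\<in>seqs n. \<Sum>ys\<in>seqs n. (\<Sum>m<T. D m ys) / real T * prod_chan W ys xs)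
      = (\<Sum>ys\<in>seqs n. (\<Sum>m<T. D m ys) / real T * (\<Sum>xs\<in>seqs n. prod_chan W ys xs))"
    unfolding sum_distrib_left by (rule sum.swap)
  also have "\<dots> = (\<Sum>m<T. \<Sum>ys\<in>seqs n. D m ys) / real T"
    by (simp add: sum_prod_chan[OF W] sum_divide_distrib[symmetric] sum.swap[of _ "seqs n"])
  also have "\<dots> = 1"
    using prot by (simp add: is_protocol_def)
  finally show ?thesis .
qed

lemma joint_expect_joint_dist_sum:
  "joint_expect n (joint_dist PX T E D) (\<lambda>xs ys. \<Sum>i<n. \<phi> (xs ! i))
   = real n * (\<Sum>x\<in>UNIV. PX x * \<phi> x)"
  unfolding joint_expect_def
  by (simp add: sum_distrib_right[symmetric] sum_joint_dist_row sum_iid_mult_sum[OF PX]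
      cong: sum.cong)

lemma is_pmf_avg_marginal:
  assumes "n > 0"
  shows "is_pmf (avg_marginal n (ymarg n (joint_dist PX T E D)))"
proof -
  have "0 \<le> ymarg n (joint_dist PX T E D) ys" if "ys \<in> seqs n" for ys
    unfolding ymarg_def using that by (intro sum_nonneg joint_dist_nonneg)
  then have "0 \<le> avg_marginal n (ymarg n (joint_dist PX T E D)) y" for y
    unfolding avg_marginal_def by (intro divide_nonneg_nonneg sum_nonneg mult_nonneg_nonneg) auto
  moreover have "(\<Sum>y\<in>UNIV. avg_marginal n (ymarg n (joint_dist PX T E D)) y) = 1"
    using sum_avg_marginal_mult[of n "ymarg n (joint_dist PX T E D)" "\<lambda>_. 1"] assms
    by (simp add: sum_distrib_right[symmetric] sum_ymarg)
  ultimately show ?thesis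
    by (simp add: is_pmf_def)
qed

lemma log_loss_pointwise_lower_pos:
  fixes W :: "'y \<Rightarrow> 'x \<Rightarrow> real"
  assumes xs: "xs \<in> seqs n" and ys: "ys \<in> seqs n"
    and J_pos: "joint_dist PX T E D xs ys > 0" and W_pos: "prod_chan W ys xs > 0"
  shows "joint_dist PX T E D xs ys * (\<Sum>i<n. - log 2 (PX (xs ! i))) - joint_dist PX T E D xs ys * log 2 T
           - (\<Sum>m<T. D m ys) / real T * prod_chan W ys xs / ln 2
         \<le> joint_dist PX T E D xs ys * log_loss W n xs ys"
proof -
  have T: "real T \<ge> 1" and E_nonneg: "\<And>m. m < T \<Longrightarrow> 0 \<le> E xs m"
    and E_sum: "(\<Sum>m<T. E xs m) = 1" and D_nonneg: "\<And>m. m < T \<Longrightarrow> 0 \<le> D m ys"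
    using prot xs ys by (auto simp: is_protocol_def)
  define s where "s = (\<Sum>m<T. E xs m * D m ys)"
  have J_eq: "joint_dist PX T E D xs ys = iid PX xs * s"
    by (simp add: joint_dist_def s_def)
  have "0 \<le> s"
    unfolding s_def using E_nonneg D_nonneg by (auto intro!: sum_nonneg)
  then have iid_pos: "iid PX xs > 0" and s_pos: "s > 0"
    using J_pos iid_nonneg[OF PX, of xs] by (auto simp: J_eq zero_less_mult_iff)
  have "E xs m \<le> 1" if "m < T" for m
    using E_sum member_le_sum[of m "{..<T}" "E xs"] E_nonneg that by simp
  then have "s \<le> (\<Sum>m<T. D m ys)"
    unfolding s_def using D_nonneg E_nonneg by (intro sum_mono) (simp add: mult_left_le_one_le)
  note gibbs = gibbs_pointwise[OF iid_pos s_pos this W_pos T]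
  have "- log 2 (iid PX xs) = (\<Sum>i<n. - log 2 (PX (xs ! i)))"
    unfolding iid_seqs[OF xs]
    by (rule neg_log_prod_lessThan) (use iid_pos iid_seqs[OF xs, of PX] in linarith)
  moreover have "- log 2 (prod_chan W ys xs) = log_loss W n xs ys"
    unfolding log_loss_def prod_chan_seqs[OF xs]
    by (rule neg_log_prod_lessThan) (use W_pos prod_chan_seqs[OF xs, of W ys] in linarith)
  ultimately show ?thesis
    using gibbs by (simp add: J_eq)
qed

text \<open>Since \<open>log 2 0 = 0\<close>, a pair with \<open>prod_chan W ys xs = 0\<close> has zero log loss; there
  \<open>ymarg_chan\<close> vanishes, and the total-variation term pays for the missing lower bound.\<close>
lemma log_loss_pointwise_lower:
  fixes W :: "'y \<Rightarrow> 'x \<Rightarrow> real"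
  assumes W: "is_channel W" and xs: "xs \<in> seqs n" and ys: "ys \<in> seqs n"
  defines "J \<equiv> joint_dist PX T E D" and "h \<equiv> \<Sum>i<n. - log 2 (PX (xs ! i))"
    and "R \<equiv> (\<Sum>m<T. D m ys) / real T * prod_chan W ys xs"
  shows "J xs ys * h - J xs ys * log 2 T - R / ln 2 - \<bar>J xs ys - ymarg_chan n J W xs ys\<bar> * h
         \<le> J xs ys * log_loss W n xs ys"
proof -
  have J_nonneg: "0 \<le> J xs ys"
    unfolding J_def using xs ys by (rule joint_dist_nonneg)
  have "0 \<le> h"
    unfolding h_def using PX by (intro sum_nonneg neg_log_nonneg) (auto simp: pmf_nonneg pmf_le_1)
  then have tv_h: "0 \<le> \<bar>J xs ys - ymarg_chan n J W xs ys\<bar> * h"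
    by simp
  have R_ln: "0 \<le> R / ln 2"
    unfolding R_def using prot ys prod_chan_nonneg[OF W]
    by (intro divide_nonneg_nonneg mult_nonneg_nonneg sum_nonneg) (auto simp: is_protocol_def)
  have log_T: "0 \<le> J xs ys * log 2 T"
    using J_nonneg prot by (simp add: is_protocol_def)
  have loss: "0 \<le> J xs ys * log_loss W n xs ys"
    using J_nonneg log_loss_nonneg[OF W] by simp
  consider "J xs ys = 0" | "prod_chan W ys xs = 0" | "J xs ys > 0" "prod_chan W ys xs > 0"
    using J_nonneg prod_chan_nonneg[OF W, of ys xs] by linarith
  then show ?thesis
  proof cases
    case 1
    then show ?thesis
      using R_ln tv_h by simp
  next
    case 2
    then have "\<bar>J xs ys - ymarg_chan n J W xs ys\<bar> * h = J xs ys * h"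
      using J_nonneg by (simp add: ymarg_chan_def)
    then show ?thesis
      using log_T R_ln loss by linarith
  next
    case 3
    then show ?thesis
      using log_loss_pointwise_lower_pos[OF xs ys] tv_h unfolding J_def h_def R_def by fastforce
  qed
qed

lemma joint_expect_log_loss_lower:
  fixes W :: "'y \<Rightarrow> 'x \<Rightarrow> real"
  assumes W: "is_channel W"
  shows "real n * entropy PX - log 2 T - 1 / ln 2
           - 2 * tv_to_channel n (joint_dist PX T E D) W * (real n * (\<Sum>x\<in>UNIV. - log 2 (PX x)))
         \<le> joint_expect n (joint_dist PX T E D) (log_loss W n)"
proof -
  define J where "J = joint_dist PX T E D"
  define h where "h xs = (\<Sum>i<n. - log 2 (PX (xs ! i)))" for xs
  define R where "R xs ys = (\<Sum>m<T. D m ys) / real T * prod_chan W ys xs" for xs ys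
  define C where "C = (\<Sum>x\<in>UNIV. - log 2 (PX x))"
  have neg_log_PX: "0 \<le> - log 2 (PX x)" for x
    using PX by (intro neg_log_nonneg) (auto simp: pmf_nonneg pmf_le_1)
  have "- log 2 (PX x) \<le> C" for x
    unfolding C_def by (rule member_le_sum) (use neg_log_PX in auto)
  then have h_le: "h xs \<le> real n * C" for xs
    using sum_mono[of "{..<n}" "\<lambda>i. - log 2 (PX (xs ! i))" "\<lambda>_. C"] by (simp add: h_def)
  let ?tv_h = "\<Sum>xs\<in>seqs n. \<Sum>ys\<in>seqs n. \<bar>J xs ys - ymarg_chan n J W xs ys\<bar> * h xs"
  have sum_J_h: "(\<Sum>xs\<in>seqs n. \<Sum>ys\<in>seqs n. J xs ys * h xs) = real n * entropy PX"
    using joint_expect_joint_dist_sum[of "\<lambda>x. - log 2 (PX x)"]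
    by (simp add: joint_expect_def J_def h_def entropy_def)
  have sum_J: "(\<Sum>xs\<in>seqs n. \<Sum>ys\<in>seqs n. J xs ys) = 1"
    unfolding J_def by (rule sum_joint_dist)
  have sum_R: "(\<Sum>xs\<in>seqs n. \<Sum>ys\<in>seqs n. R xs ys) = 1"
    unfolding R_def by (rule sum_decoder_output_chan[OF W])
  have "(\<Sum>xs\<in>seqs n. \<Sum>ys\<in>seqs n. J xs ys * h xs - J xs ys * log 2 T - R xs ys / ln 2
          - \<bar>J xs ys - ymarg_chan n J W xs ys\<bar> * h xs)
        \<le> joint_expect n J (log_loss W n)"
    unfolding joint_expect_def h_def R_def J_def
    by (intro sum_mono log_loss_pointwise_lower[OF W])
  moreover have "(\<Sum>xs\<in>seqs n. \<Sum>ys\<in>seqs n. J xs ys * h xs - J xs ys * log 2 T - R xs ys / ln 2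
          - \<bar>J xs ys - ymarg_chan n J W xs ys\<bar> * h xs)
      = real n * entropy PX - log 2 T - 1 / ln 2 - ?tv_h"
    using sum_J_h sum_J sum_R
    by (simp add: sum_subtractf sum_distrib_right[symmetric] sum_divide_distrib[symmetric])
  moreover have "?tv_h \<le> 2 * tv_to_channel n J W * (real n * C)"
  proof -
    have "?tv_h \<le> (\<Sum>xs\<in>seqs n. \<Sum>ys\<in>seqs n. \<bar>J xs ys - ymarg_chan n J W xs ys\<bar> * (real n * C))"
      by (intro sum_mono mult_left_mono h_le) simp
    then show ?thesis
      by (simp add: tv_to_channel_def ymarg_chan_def sum_distrib_right)
  qed
  ultimately show ?thesis
    unfolding J_def C_def by linarith
qed

lemma avg_marginal_chan_close:
  fixes W :: "'y \<Rightarrow> 'x \<Rightarrow> real"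
  assumes W: "is_channel W" and n: "n > 0"
  shows "\<bar>(\<Sum>y\<in>UNIV. avg_marginal n (ymarg n (joint_dist PX T E D)) y * W y x) - PX x\<bar>
         \<le> 2 * tv_to_channel n (joint_dist PX T E D) W"
proof -
  let ?J = "joint_dist PX T E D" and ?F = "\<lambda>xs ys. \<Sum>i<n. of_bool (xs ! i = x) :: real"
  have "\<bar>?F xs ys\<bar> \<le> real n" for xs ys
    using sum_mono[of "{..<n}" "\<lambda>i. of_bool (xs ! i = x) :: real" "\<lambda>_. 1"] by (simp add: sum_nonneg)
  then have "\<bar>joint_expect n ?J ?F - joint_expect n (ymarg_chan n ?J W) ?F\<bar>
      \<le> 2 * tv_to_channel n ?J W * real n"
    by (rule joint_expect_ymarg_chan_diff_le)
  moreover have "joint_expect n ?J ?F = real n * PX x"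
    using joint_expect_joint_dist_sum[of "\<lambda>x'. of_bool (x' = x)"] by simp
  moreover have "joint_expect n (ymarg_chan n ?J W) ?F
      = real n * (\<Sum>y\<in>UNIV. avg_marginal n (ymarg n ?J) y * W y x)"
    using joint_expect_ymarg_chan_sum[OF W, of n ?J "\<lambda>_ x'. of_bool (x' = x)"] by simp
  ultimately have "real n * \<bar>(\<Sum>y\<in>UNIV. avg_marginal n (ymarg n ?J) y * W y x) - PX x\<bar>
      \<le> 2 * tv_to_channel n ?J W * real n"
    by (simp add: abs_minus_commute right_diff_distrib[symmetric] abs_mult)
  then show ?thesis
    using n by (simp add: mult.commute[of _ "real n"])
qed

lemma joint_expect_distortion:
  fixes W :: "'y \<Rightarrow> 'x \<Rightarrow> real"
  assumes "n > 0"
  shows "joint_expect n (joint_dist PX T E D)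
           (\<lambda>xs ys. (1 / real n) * (\<Sum>i<n. - c * log 2 (W (ys ! i) (xs ! i)) + b (xs ! i)))
         = c * (joint_expect n (joint_dist PX T E D) (log_loss W n) / real n)
           + (\<Sum>x\<in>UNIV. PX x * b x)"
proof -
  have "(\<Sum>i<n. - c * log 2 (W (ys ! i) (xs ! i)) + b (xs ! i))
      = c * log_loss W n xs ys + (\<Sum>i<n. b (xs ! i))" for xs ys
    by (simp add: log_loss_def sum.distrib sum_distrib_left sum_subtractf sum_negf)
  then have "(\<lambda>xs ys. (1 / real n) * (\<Sum>i<n. - c * log 2 (W (ys ! i) (xs ! i)) + b (xs ! i)))
      = (\<lambda>xs ys. (c / real n) * log_loss W n xs ys + (1 / real n) * (\<Sum>i<n. b (xs ! i)))"
    by (simp add: distrib_left)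
  then show ?thesis
    using assms by (simp only: joint_expect_linear joint_expect_joint_dist_sum) simp
qed

end

section \<open>Single-letter quantities and asymptotics\<close>

lemma MI_of_compat:
  fixes W :: "'y::finite \<Rightarrow> 'x::finite \<Rightarrow> real"
  assumes W: "is_channel W" and Q: "Q \<in> compat_set PX W"
  shows "MI_of Q W = entropy PX - (\<Sum>y\<in>UNIV. Q y * entropy (W y))"
proof -
  have Q_nonneg: "\<And>y. 0 \<le> Q y" and PX_eq: "\<And>x. (\<Sum>y\<in>UNIV. Q y * W y x) = PX x"
    using Q by (auto simp: compat_set_def is_pmf_def)
  have W_nonneg: "\<And>y x. 0 \<le> W y x" and W_sum: "\<And>y. (\<Sum>x\<in>UNIV. W y x) = 1"
    using W by (auto simp: is_channel_def is_pmf_def)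
  have summand: "(if Q y * W y x = 0 then 0
       else Q y * W y x * log 2 (Q y * W y x / ((\<Sum>y'\<in>UNIV. Q y' * W y' x) * (\<Sum>x'\<in>UNIV. Q y * W y x'))))
     = Q y * W y x * log 2 (W y x) - Q y * W y x * log 2 (PX x)" for x y
  proof (cases "Q y * W y x = 0")
    case False
    then have Q_pos: "Q y > 0" and W_pos: "W y x > 0"
      using Q_nonneg[of y] W_nonneg[of y x] by (auto simp: less_le)
    have "Q y * W y x \<le> PX x"
      unfolding PX_eq[symmetric] using Q_nonneg W_nonneg by (intro member_le_sum) auto
    moreover have "Q y * W y x > 0"
      using Q_pos W_pos by simp
    ultimately have "PX x > 0"
      by linarith
    then show ?thesis
      using Q_pos W_pos
      by (simp add: PX_eq sum_distrib_left[symmetric] W_sum log_divide log_mult right_diff_distrib)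
  qed simp
  have "MI_of Q W = (\<Sum>x\<in>UNIV. \<Sum>y\<in>UNIV. Q y * W y x * log 2 (W y x))
                    - (\<Sum>x\<in>UNIV. \<Sum>y\<in>UNIV. Q y * W y x * log 2 (PX x))"
    unfolding MI_of_def mutual_info_def summand by (simp add: sum_subtractf)
  also have "(\<Sum>x\<in>UNIV. \<Sum>y\<in>UNIV. Q y * W y x * log 2 (W y x)) = - (\<Sum>y\<in>UNIV. Q y * entropy (W y))"
    by (subst sum.swap) (simp add: entropy_def sum_distrib_left sum_negf mult.assoc)
  also have "(\<Sum>x\<in>UNIV. \<Sum>y\<in>UNIV. Q y * W y x * log 2 (PX x)) = - entropy PX"
    by (simp add: entropy_def sum_distrib_right[symmetric] PX_eq sum_negf)
  finally show ?thesis
    by simp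
qed

lemma expect_distortion_compat:
  fixes W :: "'y::finite \<Rightarrow> 'x::finite \<Rightarrow> real"
  assumes "Q \<in> compat_set PX W"
  shows "(\<Sum>x\<in>UNIV. \<Sum>y\<in>UNIV. Q y * W y x * (- c * log 2 (W y x) + b x))
       = c * (\<Sum>y\<in>UNIV. Q y * entropy (W y)) + (\<Sum>x\<in>UNIV. PX x * b x)"
proof -
  have "(\<Sum>x\<in>UNIV. \<Sum>y\<in>UNIV. Q y * W y x * (- c * log 2 (W y x) + b x))
      = (\<Sum>x\<in>UNIV. \<Sum>y\<in>UNIV. c * (Q y * - (W y x * log 2 (W y x))) + Q y * W y x * b x)"
    by (intro sum.cong refl) (simp add: algebra_simps)
  also have "\<dots> = c * (\<Sum>x\<in>UNIV. \<Sum>y\<in>UNIV. Q y * - (W y x * log 2 (W y x)))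
        + (\<Sum>x\<in>UNIV. (\<Sum>y\<in>UNIV. Q y * W y x) * b x)"
    by (simp only: sum.distrib sum_distrib_left sum_distrib_right)
  also have "\<dots> = c * (\<Sum>y\<in>UNIV. Q y * entropy (W y)) + (\<Sum>x\<in>UNIV. PX x * b x)"
    using assms by (subst sum.swap) (simp add: entropy_def compat_set_def sum_distrib_left)
  finally show ?thesis .
qed

lemma pmf_seq_convergent_subseq:
  fixes Q :: "nat \<Rightarrow> 'y::finite \<Rightarrow> real"
  assumes "\<And>k. is_pmf (Q k)"
  obtains r Q' where "strict_mono r" "is_pmf Q'" "\<And>y. (\<lambda>k. Q (r k) y) \<longlonglongrightarrow> Q' y"
proof -
  define v where "v k = (\<chi> y. Q k y)" for k
  have "v k \<in> cbox 0 1" for k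
    using assms by (simp add: mem_box_cart v_def pmf_nonneg pmf_le_1)
  then obtain l r where l: "l \<in> cbox 0 1" and r: "strict_mono r" and lim: "(v \<circ> r) \<longlonglongrightarrow> l"
    using seq_compactE[OF compact_imp_seq_compact[OF compact_cbox]] by metis
  have conv: "(\<lambda>k. Q (r k) y) \<longlonglongrightarrow> l $ y" for y
    using tendsto_vec_nth[OF lim, of y] by (simp add: v_def comp_def)
  have "(\<lambda>k. \<Sum>y\<in>UNIV. Q (r k) y) \<longlonglongrightarrow> (\<Sum>y\<in>UNIV. l $ y)"
    by (intro tendsto_sum conv)
  moreover have "(\<lambda>k. \<Sum>y\<in>UNIV. Q (r k) y) = (\<lambda>k. 1)"
    using assms by (simp add: is_pmf_def)
  ultimately have "(\<Sum>y\<in>UNIV. l $ y) = 1"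
    by (simp add: LIMSEQ_const_iff)
  with l have "is_pmf (\<lambda>y. l $ y)"
    by (simp add: is_pmf_def mem_box_cart)
  then show ?thesis
    by (rule that[OF r _ conv])
qed

lemma eventually_sum_less_compat_bound:
  fixes Q :: "nat \<Rightarrow> 'y::finite \<Rightarrow> real" and W :: "'y \<Rightarrow> 'x::finite \<Rightarrow> real"
  assumes pmf: "eventually (\<lambda>n. is_pmf (Q n)) sequentially"
    and chan: "\<And>x. (\<lambda>n. \<Sum>y\<in>UNIV. Q n y * W y x) \<longlonglongrightarrow> PX x"
    and bound: "\<And>Q'. Q' \<in> compat_set PX W \<Longrightarrow> (\<Sum>y\<in>UNIV. Q' y * g y) \<le> G"
    and "\<epsilon> > 0"
  shows "eventually (\<lambda>n. (\<Sum>y\<in>UNIV. Q n y * g y) < G + \<epsilon>) sequentially"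
proof (rule ccontr)
  assume fails: "\<not> ?thesis"
  have "\<not> eventually (\<lambda>n. is_pmf (Q n) \<longrightarrow> (\<Sum>y\<in>UNIV. Q n y * g y) < G + \<epsilon>) sequentially"
  proof
    assume "eventually (\<lambda>n. is_pmf (Q n) \<longrightarrow> (\<Sum>y\<in>UNIV. Q n y * g y) < G + \<epsilon>) sequentially"
    with pmf have "eventually (\<lambda>n. (\<Sum>y\<in>UNIV. Q n y * g y) < G + \<epsilon>) sequentially"
      by eventually_elim simp
    with fails show False ..
  qed
  from not_eventually_sequentiallyD[OF this] obtain r :: "nat \<Rightarrow> nat" where r: "strict_mono r"
    and r_fails: "\<forall>k. \<not> (is_pmf (Q (r k)) \<longrightarrow> (\<Sum>y\<in>UNIV. Q (r k) y * g y) < G + \<epsilon>)"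
    by blast
  then have r_pmf: "\<And>k. is_pmf (Q (r k))" and r_ge: "\<And>k. G + \<epsilon> \<le> (\<Sum>y\<in>UNIV. Q (r k) y * g y)"
    by (auto simp: not_less)
  obtain s Q' where s: "strict_mono s" and "is_pmf Q'" and conv: "\<And>y. (\<lambda>k. Q (r (s k)) y) \<longlonglongrightarrow> Q' y"
    using pmf_seq_convergent_subseq[of "\<lambda>k. Q (r k)"] r_pmf by metis
  have "(\<Sum>y\<in>UNIV. Q' y * W y x) = PX x" for x
  proof (rule LIMSEQ_unique)
    show "(\<lambda>k. \<Sum>y\<in>UNIV. Q (r (s k)) y * W y x) \<longlonglongrightarrow> (\<Sum>y\<in>UNIV. Q' y * W y x)"
      by (intro tendsto_intros conv)
    show "(\<lambda>k. \<Sum>y\<in>UNIV. Q (r (s k)) y * W y x) \<longlonglongrightarrow> PX x"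
      using LIMSEQ_subseq_LIMSEQ[OF chan strict_mono_o[OF r s]] by (simp add: comp_def)
  qed
  with \<open>is_pmf Q'\<close> have "(\<Sum>y\<in>UNIV. Q' y * g y) \<le> G"
    by (intro bound) (simp add: compat_set_def)
  moreover have "G + \<epsilon> \<le> (\<Sum>y\<in>UNIV. Q' y * g y)"
    by (rule LIMSEQ_le_const[OF tendsto_sum[OF tendsto_mult_right[OF conv]]]) (simp add: r_ge)
  ultimately show False
    using \<open>\<epsilon> > 0\<close> by simp
qed

lemma eventually_log_loss_rate_gt:
  fixes PX :: "'x::finite \<Rightarrow> real" and W :: "'y::finite \<Rightarrow> 'x \<Rightarrow> real"
    and \<Theta> :: "nat \<Rightarrow> nat" and E :: "nat \<Rightarrow> 'x list \<Rightarrow> nat \<Rightarrow> real" and D :: "nat \<Rightarrow> nat \<Rightarrow> 'y list \<Rightarrow> real"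
  assumes PX: "is_pmf PX" and W: "is_channel W" and prot: "\<And>n. is_protocol n (\<Theta> n) (E n) (D n)"
    and rate: "(\<lambda>n. log 2 (real (\<Theta> n)) / real n) \<longlonglongrightarrow> entropy PX - G"
    and tv: "(\<lambda>n. tv_to_channel n (joint_dist PX (\<Theta> n) (E n) (D n)) W) \<longlonglongrightarrow> 0"
    and "z < G"
  shows "eventually (\<lambda>n. z < joint_expect n (joint_dist PX (\<Theta> n) (E n) (D n)) (log_loss W n) / real n)
           sequentially"
proof -
  define J where "J n = joint_dist PX (\<Theta> n) (E n) (D n)" for n
  define t where "t = (\<lambda>n. tv_to_channel n (J n) W)"
  define C where "C = (\<Sum>x\<in>UNIV. - log 2 (PX x))"
  define l where "l n = entropy PX - log 2 (real (\<Theta> n)) / real n - 1 / ln 2 * (1 / real n) - 2 * C * t n"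
    for n
  have "l \<longlonglongrightarrow> entropy PX - (entropy PX - G) - 1 / ln 2 * 0 - 2 * C * 0"
    unfolding l_def using tv by (intro tendsto_intros rate lim_1_over_n) (simp add: t_def J_def)
  then have "eventually (\<lambda>n. z < l n) sequentially"
    using \<open>z < G\<close> by (intro order_tendstoD(1)) simp_all
  moreover have "eventually (\<lambda>n. l n \<le> joint_expect n (J n) (log_loss W n) / real n) sequentially"
    using eventually_gt_at_top[of 0]
  proof eventually_elim
    case (elim n)
    have "(real n * entropy PX - log 2 (\<Theta> n) - 1 / ln 2 - 2 * t n * (real n * C)) / real n
        \<le> joint_expect n (J n) (log_loss W n) / real n"
      using joint_expect_log_loss_lower[OF PX prot W, of n]
      by (intro divide_right_mono) (simp_all add: J_def t_def C_def)
    also have "(real n * entropy PX - log 2 (\<Theta> n) - 1 / ln 2 - 2 * t n * (real n * C)) / real n = l n"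
      using elim by (simp add: l_def field_simps)
    finally show ?case .
  qed
  ultimately show ?thesis
    unfolding J_def by eventually_elim simp
qed

lemma eventually_log_loss_rate_lt:
  fixes PX :: "'x::finite \<Rightarrow> real" and W :: "'y::finite \<Rightarrow> 'x \<Rightarrow> real"
    and \<Theta> :: "nat \<Rightarrow> nat" and E :: "nat \<Rightarrow> 'x list \<Rightarrow> nat \<Rightarrow> real" and D :: "nat \<Rightarrow> nat \<Rightarrow> 'y list \<Rightarrow> real"
  assumes PX: "is_pmf PX" and W: "is_channel W" and prot: "\<And>n. is_protocol n (\<Theta> n) (E n) (D n)"
    and tv: "(\<lambda>n. tv_to_channel n (joint_dist PX (\<Theta> n) (E n) (D n)) W) \<longlonglongrightarrow> 0"
    and max: "\<And>Q. Q \<in> compat_set PX W \<Longrightarrow> (\<Sum>y\<in>UNIV. Q y * entropy (W y)) \<le> G"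
    and "G < z"
  shows "eventually (\<lambda>n. joint_expect n (joint_dist PX (\<Theta> n) (E n) (D n)) (log_loss W n) / real n < z)
           sequentially"
proof -
  define J where "J n = joint_dist PX (\<Theta> n) (E n) (D n)" for n
  define t where "t = (\<lambda>n. tv_to_channel n (J n) W)"
  define Q where "Q n = avg_marginal n (ymarg n (J n))" for n
  define C where "C = (\<Sum>y\<in>UNIV. \<Sum>x\<in>UNIV. - log 2 (W y x))"
  define \<epsilon> where "\<epsilon> = (z - G) / 2"
  have t: "t \<longlonglongrightarrow> 0" and "\<epsilon> > 0"
    using tv \<open>G < z\<close> by (simp_all add: t_def J_def \<epsilon>_def)
  have "(\<lambda>n. \<Sum>y\<in>UNIV. Q n y * W y x) \<longlonglongrightarrow> PX x" for x
  proof -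
    have "eventually (\<lambda>n. norm ((\<Sum>y\<in>UNIV. Q n y * W y x) - PX x) \<le> 2 * t n) sequentially"
      using eventually_gt_at_top[of 0]
      by eventually_elim (simp add: Q_def t_def J_def avg_marginal_chan_close[OF PX prot W])
    from Lim_null_comparison[OF this tendsto_mult_right_zero[OF t]]
    show ?thesis
      by (rule LIM_zero_cancel)
  qed
  moreover have "eventually (\<lambda>n. is_pmf (Q n)) sequentially"
    using eventually_gt_at_top[of 0]
    by eventually_elim (simp add: Q_def J_def is_pmf_avg_marginal[OF PX prot])
  ultimately have "eventually (\<lambda>n. (\<Sum>y\<in>UNIV. Q n y * entropy (W y)) < G + \<epsilon>) sequentially"
    using \<open>\<epsilon> > 0\<close> by (intro eventually_sum_less_compat_bound[where W = W and PX = PX] max) auto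
  moreover have "eventually (\<lambda>n. 2 * C * t n < \<epsilon>) sequentially"
    using \<open>\<epsilon> > 0\<close> by (intro order_tendstoD(2)[OF tendsto_mult_right_zero[OF t]])
  ultimately show ?thesis
    using eventually_gt_at_top[of 0] unfolding J_def[symmetric]
  proof eventually_elim
    case (elim n)
    have "joint_expect n (J n) (log_loss W n) / real n
        \<le> (real n * (\<Sum>y\<in>UNIV. Q n y * entropy (W y)) + 2 * t n * (real n * C)) / real n"
      using joint_expect_log_loss_upper[OF W, of n "J n"]
      by (intro divide_right_mono) (simp_all add: Q_def t_def C_def)
    also have "\<dots> = (\<Sum>y\<in>UNIV. Q n y * entropy (W y)) + 2 * C * t n"
      using elim by (simp add: field_simps)
    finally show ?case
      using elim unfolding \<epsilon>_def by argo
  qed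
qed

theorem theorem4:
  fixes PX :: "'x::finite \<Rightarrow> real"
    and W :: "'y::finite \<Rightarrow> 'x \<Rightarrow> real"
    and PY :: "'y \<Rightarrow> real"
    and \<Theta> :: "nat \<Rightarrow> nat"
    and E :: "nat \<Rightarrow> 'x list \<Rightarrow> nat \<Rightarrow> real"
    and D :: "nat \<Rightarrow> nat \<Rightarrow> 'y list \<Rightarrow> real"
    and c :: real
    and b :: "'x \<Rightarrow> real"
  assumes PX: "is_pmf PX"
    and W: "is_channel W"
    and PY_in: "PY \<in> compat_set PX W"
    and PY_min: "\<forall>Q\<in>compat_set PX W. MI_of PY W \<le> MI_of Q W"
    and prot: "\<forall>n. is_protocol n (\<Theta> n) (E n) (D n)"
    and rate: "(\<lambda>n. log 2 (real (\<Theta> n)) / real n) \<longlonglongrightarrow> MI_of PY W"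
    and tv: "(\<lambda>n. tv_to_channel n (joint_dist PX (\<Theta> n) (E n) (D n)) W) \<longlonglongrightarrow> 0"
    and c: "c > 0"
  shows "(\<lambda>n. \<Sum>xs\<in>seqs n. \<Sum>ys\<in>seqs n.
            joint_dist PX (\<Theta> n) (E n) (D n) xs ys *
            ((1 / real n) * (\<Sum>i<n. - c * log 2 (W (ys ! i) (xs ! i)) + b (xs ! i))))
         \<longlonglongrightarrow> (\<Sum>x\<in>UNIV. \<Sum>y\<in>UNIV. PY y * W y x * (- c * log 2 (W y x) + b x))"
proof -
  define G where "G = (\<Sum>y\<in>UNIV. PY y * entropy (W y))"
  have max: "(\<Sum>y\<in>UNIV. Q y * entropy (W y)) \<le> G" if "Q \<in> compat_set PX W" for Q
    using PY_min that by (auto simp: G_def MI_of_compat[OF W PY_in] MI_of_compat[OF W that])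
  have rate': "(\<lambda>n. log 2 (real (\<Theta> n)) / real n) \<longlonglongrightarrow> entropy PX - G"
    using rate by (simp add: G_def MI_of_compat[OF W PY_in])
  have "(\<lambda>n. joint_expect n (joint_dist PX (\<Theta> n) (E n) (D n)) (log_loss W n) / real n) \<longlonglongrightarrow> G"
    using eventually_log_loss_rate_gt[OF PX W _ rate' tv] eventually_log_loss_rate_lt[OF PX W _ tv max] prot
    by (intro order_tendstoI) auto
  then have "(\<lambda>n. c * (joint_expect n (joint_dist PX (\<Theta> n) (E n) (D n)) (log_loss W n) / real n)
      + (\<Sum>x\<in>UNIV. PX x * b x)) \<longlonglongrightarrow> c * G + (\<Sum>x\<in>UNIV. PX x * b x)"
    by (intro tendsto_intros)
  moreover have "eventually (\<lambda>n. c * (joint_expect n (joint_dist PX (\<Theta> n) (E n) (D n)) (log_loss W n) / real n)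
      + (\<Sum>x\<in>UNIV. PX x * b x) = joint_expect n (joint_dist PX (\<Theta> n) (E n) (D n))
      (\<lambda>xs ys. (1 / real n) * (\<Sum>i<n. - c * log 2 (W (ys ! i) (xs ! i)) + b (xs ! i)))) sequentially"
    using eventually_gt_at_top[of 0]
  proof eventually_elim
    case (elim n)
    show ?case
      by (rule joint_expect_distortion[OF PX spec[OF prot] elim, symmetric])
  qed
  ultimately have "(\<lambda>n. joint_expect n (joint_dist PX (\<Theta> n) (E n) (D n))
      (\<lambda>xs ys. (1 / real n) * (\<Sum>i<n. - c * log 2 (W (ys ! i) (xs ! i)) + b (xs ! i))))
      \<longlonglongrightarrow> c * G + (\<Sum>x\<in>UNIV. PX x * b x)"
    by (rule Lim_transform_eventually)
  then show ?thesis
    unfolding joint_expect_def expect_distortion_compat[OF PY_in] G_def .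
qed

end
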